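(* Let $k\ge 2$ be an integer, $\varepsilon=\exp(2\pi i/k)$, and let $P$ be the complex activation function of order $k$ described in the context. Let $T\subset\mathbb{BC}^n$ be bounded, i.e. $T=T_1\mathbf e_1+T_2\mathbf e_2$ with $T_1,T_2\subset\mathbb C^n$ bounded. Let $f:T\to\mathbb{BC}$ be a $\mathbb{BC}$-threshold function having $(\mathsf w_0,0,\dots,0)\in\mathbb{BC}^{n+1}$ as a weighting vector. Then there exist $\mathsf w_0'\in\mathbb{BC}$ and $\delta>0$ such that $(\mathsf w_0',\mathsf w_1,\dots,\mathsf w_n)$ is a weighting vector of $f$ for every $\mathsf w_1,\dots,\mathsf w_n\in\mathbb{BC}$ satisfying, for each $\ell=1,\dots,n$, writing $\mathsf w_\ell=w_{\ell_1}\mathbf e_1+w_{\ell_2}\mathbf e_2$: $|w_{\ell_1}|<\delta$ and $|w_{\ell_2}|<\delta$ (equivalently, $\mathsf w_\ell$ has hyperbolic modulus bounded by $\delta\mathbf e_1+\delta\mathbf e_2$).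
   Context: Bicomplex numbers: $\mathbb{BC}=\{z_1+\mathbf j z_2: z_1,z_2\in\mathbb C\}$ where $\mathbb C=\mathbb C(\mathbf i)$, $\mathbf i,\mathbf j$ are commuting units with $\mathbf i^2=\mathbf j^2=-1$. Put $\mathbf e_1=\frac{1+\mathbf i\mathbf j}{2}$, $\mathbf e_2=\frac{1-\mathbf i\mathbf j}{2}$; then $\mathbf e_1^2=\mathbf e_1$, $\mathbf e_2^2=\mathbf e_2$, $\mathbf e_1\mathbf e_2=0$, $\mathbf e_1+\mathbf e_2=1$, and every $Z=z_1+\mathbf jz_2$ is uniquely $Z=\lambda_1\mathbf e_1+\lambda_2\mathbf e_2$ with $\lambda_1=z_1-\mathbf iz_2$, $\lambda_2=z_1+\mathbf iz_2\in\mathbb C$; addition and multiplication are componentwise in this representation. Vectors in $\mathbb{BC}^n$ are likewise written $X_1\mathbf e_1+X_2\mathbf e_2$ with $X_1,X_2\in\mathbb C^n$. Complex activation function: for $z\in\mathbb C\setminus\{0\}$ with argument $\arg z\in[0,2\pi)$, $P(z)=\varepsilon^{l}$ whenever $\frac{2\pi l}{k}\le \arg z<\frac{2\pi(l+1)}{k}$, $l\in\{0,\dots,k-1\}$. Bicomplex activation function: for $\mathsf w_0=w_{0_1}\mathbf e_1+w_{0_2}\mathbf e_2$, $\mathsf w_\ell=w_{\ell_1}\mathbf e_1+w_{\ell_2}\mathbf e_2$, $\mathsf x_\ell=x_{\ell_1}\mathbf e_1+x_{\ell_2}\mathbf e_2$ ($\ell=1,\dots,n$), $\mathcal P(\mathsf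 w_0+\sum_{\ell=1}^n\mathsf w_\ell\mathsf x_\ell):=P(w_{0_1}+\sum_\ell w_{\ell_1}x_{\ell_1})\mathbf e_1+P(w_{0_2}+\sum_\ell w_{\ell_2}x_{\ell_2})\mathbf e_2$. A function $f:T\to\mathbb{BC}$ ($T\subset\mathbb{BC}^n$) is a $\mathbb{BC}$-threshold function if there is a weighting vector $\mathsf W=(\mathsf w_0,\dots,\mathsf w_n)\in\mathbb{BC}^{n+1}$ with $f(\mathsf x_1,\dots,\mathsf x_n)=\mathcal P(\mathsf w_0+\sum_{\ell=1}^n\mathsf w_\ell\mathsf x_\ell)$ for all $(\mathsf x_1,\dots,\mathsf x_n)\in T$. *)

theory Defs
  imports "HOL-Analysis.Analysis"
begin

text \<open>Bicomplex numbers are represented by their idempotent components: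
  a bicomplex number Z = l1 e1 + l2 e2 is the pair (l1, l2) of complex numbers;
  addition and multiplication are componentwise. A vector in BC^n is a pair
  (X1, X2) of vectors in C^n, where the index set is a finite type 'n.\<close>

type_synonym bicomplex = "complex \<times> complex"

definition arg0 :: "complex \<Rightarrow> real" where
  "arg0 z = (if Arg z < 0 then Arg z + 2 * pi else Arg z)"

text \<open>Complex activation function of order k (meaningful for z nonzero):
  P z = eps^l where 2 pi l / k <= arg z < 2 pi (l+1)/k, eps = exp(2 pi i / k).\<close>
definition cact :: "nat \<Rightarrow> complex \<Rightarrow> complex" where
  "cact k z = (exp (2 * pi * \<i> / of_nat k)) ^ nat \<lfloor>arg0 z * real k / (2 * pi)\<rfloor>"

definition wsum1 :: "bicomplex \<Rightarrow> ('n::finite \<Rightarrow> bicomplex) \<Rightarrow> (complex^'n) \<times> (complex^'n) \<Rightarrow> complex" where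
  "wsum1 w0 w x = fst w0 + (\<Sum>l\<in>UNIV. fst (w l) * (fst x $ l))"

definition wsum2 :: "bicomplex \<Rightarrow> ('n::finite \<Rightarrow> bicomplex) \<Rightarrow> (complex^'n) \<times> (complex^'n) \<Rightarrow> complex" where
  "wsum2 w0 w x = snd w0 + (\<Sum>l\<in>UNIV. snd (w l) * (snd x $ l))"

text \<open>(w0, w_1, ..., w_n) is a weighting vector of f on T: the bicomplex activation
  is defined (both components of the weighted sum are nonzero, since P is only
  defined on C \ {0}) and equals f x, for every x in T.\<close>
definition is_weighting_vector ::
  "nat \<Rightarrow> ((complex^'n) \<times> (complex^'n)) set \<Rightarrow> ((complex^'n) \<times> (complex^'n) \<Rightarrow> bicomplex)
     \<Rightarrow> bicomplex \<Rightarrow> ('n::finite \<Rightarrow> bicomplex) \<Rightarrow> bool" where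
  "is_weighting_vector k T f w0 w \<longleftrightarrow>
     (\<forall>x\<in>T. wsum1 w0 w x \<noteq> 0 \<and> wsum2 w0 w x \<noteq> 0 \<and>
        f x = (cact k (wsum1 w0 w x), cact k (wsum2 w0 w x)))"

end

theory Submission
  imports Defs
begin

text \<open>The activation acts on the two idempotent components separately, and P is constant on each
  open sector of angle 2 pi / k. Replace each component of w0 by the centre of the unit circle arc
  in the sector containing it; a small disc around that centre still lies in the sector. Since T is
  bounded, sufficiently small weights w_1, ..., w_n move the weighted sum by less than the radius of
  that disc, so the activation does not change.\<close>

lemma arg0_range: "0 \<le> arg0 z" "arg0 z < 2 * pi"
  unfolding arg0_def using mpi_less_Arg[of z] Arg_le_pi[of z] by auto

lemma arg0_polar:
  assumes "r > 0" "0 \<le> t" "t < 2 * pi"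
  shows "arg0 (of_real r * exp (\<i> * of_real t)) = t"
proof (cases "t \<le> pi")
  case True
  then have "Arg (of_real r * exp (\<i> * of_real t)) = t"
    using assms by (intro Arg_unique) auto
  then show ?thesis using assms by (simp add: arg0_def)
next
  case False
  have "exp (\<i> * of_real (t - 2 * pi)) = exp (\<i> * of_real t)"
    by (simp add: right_diff_distrib exp_diff mult.commute)
  then have "Arg (of_real r * exp (\<i> * of_real t)) = t - 2 * pi"
    using assms False by (intro Arg_unique) auto
  then show ?thesis using assms False by (simp add: arg0_def)
qed

lemma cact_index_less:
  assumes "k > 0"
  shows "nat \<lfloor>arg0 z * real k / (2 * pi)\<rfloor> < k"
proof -
  have "arg0 z * real k / (2 * pi) < real k"
    using arg0_range[of z] assms by (simp add: field_simps)
  then have "\<lfloor>arg0 z * real k / (2 * pi)\<rfloor> < int k" by linarith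
  then show ?thesis using assms by linarith
qed

lemma cact_polar:
  assumes "r > 0" "l < k" "2 * pi * real l / real k \<le> t" "t < 2 * pi * (real l + 1) / real k"
  shows "cact k (of_real r * exp (\<i> * of_real t)) = exp (2 * pi * \<i> / of_nat k) ^ l"
proof -
  have k: "real k > 0" using assms(2) by simp
  have "2 * pi * (real l + 1) / real k \<le> 2 * pi"
    using assms(2) k by (simp add: divide_le_eq)
  moreover have "0 \<le> 2 * pi * real l / real k" by simp
  ultimately have "arg0 (of_real r * exp (\<i> * of_real t)) = t"
    using assms by (intro arg0_polar) linarith+
  moreover have "real l \<le> t * real k / (2 * pi)" "t * real k / (2 * pi) < real l + 1"
    using assms(3,4) k by (simp_all add: field_simps)
  then have "\<lfloor>t * real k / (2 * pi)\<rfloor> = int l" by linarith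
  ultimately show ?thesis by (simp add: cact_def)
qed

lemma Arg_near_1:
  assumes "e > 0"
  obtains \<eta> where "\<eta> > 0" "\<And>u. norm (u - 1) < \<eta> \<Longrightarrow> u \<noteq> 0 \<and> \<bar>Arg u\<bar> < e"
proof -
  have "continuous (at 1) Arg"
    by (rule continuous_at_Arg) (auto simp: nonpos_Reals_def)
  then obtain d where "d > 0" "\<And>u. dist u 1 < d \<Longrightarrow> dist (Arg u) (Arg 1) < e"
    using assms unfolding continuous_at_eps_delta by blast
  then show ?thesis
    by (intro that[of "min d 1"]) (auto simp: dist_norm)
qed

text \<open>c is the midpoint of the unit arc in the sector of z0. No hypothesis z0 \<noteq> 0 is needed:
  arg0 0 = 0, so 0 is treated like the positive reals.\<close>
lemma cact_constant_on_ball: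
  assumes "k > 0"
  obtains c \<eta> where "\<eta> > 0" "\<And>z. z \<in> ball c \<eta> \<Longrightarrow> z \<noteq> 0 \<and> cact k z = cact k z0"
proof -
  define l where "l = nat \<lfloor>arg0 z0 * real k / (2 * pi)\<rfloor>"
  define \<theta> where "\<theta> = (2 * real l + 1) * pi / real k"
  define c where "c = exp (\<i> * of_real \<theta>)"
  have k: "real k > 0" using assms by simp
  obtain \<eta> where \<eta>: "\<eta> > 0" "\<And>u. norm (u - 1) < \<eta> \<Longrightarrow> u \<noteq> 0 \<and> \<bar>Arg u\<bar> < pi / real k"
    using Arg_near_1[of "pi / real k"] k by auto
  have "z \<noteq> 0 \<and> cact k z = cact k z0" if "z \<in> ball c \<eta>" for z
  proof -
    define u where "u = z / c"
    have "norm c = 1" by (simp add: c_def)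
    then have "u - 1 = (z - c) / c" by (auto simp: u_def diff_divide_distrib)
    then have "norm (u - 1) = norm (z - c)" by (simp add: norm_divide \<open>norm c = 1\<close>)
    then have u: "u \<noteq> 0" "\<bar>Arg u\<bar> < pi / real k"
      using \<eta>(2) that by (auto simp: dist_norm norm_minus_commute)
    have "z = c * u" by (simp add: u_def c_def)
    also have "\<dots> = of_real (norm u) * exp (\<i> * of_real (\<theta> + Arg u))"
      by (subst Arg_eq[OF u(1)]) (simp add: c_def distrib_left exp_add mult_ac)
    finally have z: "z = of_real (norm u) * exp (\<i> * of_real (\<theta> + Arg u))" .
    have "\<theta> - pi / real k = 2 * pi * real l / real k" "\<theta> + pi / real k = 2 * pi * (real l + 1) / real k"
      using k by (simp_all add: \<theta>_def field_simps)
    then have "cact k z = exp (2 * pi * \<i> / of_nat k) ^ l"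
      unfolding z using u cact_index_less[OF assms, of z0]
      by (intro cact_polar) (auto simp: l_def)
    then show ?thesis using u by (simp add: z cact_def l_def)
  qed
  then show ?thesis using \<eta>(1) that by blast
qed

lemma small_weights_small_sum:
  fixes S :: "(complex^'n::finite) set"
  assumes "bounded S" "\<eta> > 0"
  obtains \<delta> where "\<delta> > 0"
    "\<And>a v. (\<forall>l. norm (a l) < \<delta>) \<Longrightarrow> v \<in> S \<Longrightarrow> norm (\<Sum>l\<in>UNIV. a l * v $ l) < \<eta>"
proof -
  obtain B where B: "B > 0" "\<And>v. v \<in> S \<Longrightarrow> norm v \<le> B"
    using assms(1) unfolding bounded_pos by blast
  define \<delta> where "\<delta> = \<eta> / (real CARD('n) * B)"
  have "norm (\<Sum>l\<in>UNIV. a l * v $ l) < \<eta>" if a: "\<forall>l. norm (a l) < \<delta>" and v: "v \<in> S" for a v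
  proof -
    have "norm (\<Sum>l\<in>UNIV. a l * v $ l) \<le> (\<Sum>l\<in>UNIV. norm (a l) * norm (v $ l))"
      by (rule order_trans[OF norm_sum]) (simp add: norm_mult)
    also have "\<dots> < (\<Sum>l\<in>(UNIV::'n set). \<delta> * B)"
    proof (rule sum_strict_mono)
      fix l :: 'n
      have "norm (v $ l) \<le> B" using Finite_Cartesian_Product.norm_nth_le[of v l] B(2)[OF v] by linarith
      then have "norm (a l) * norm (v $ l) \<le> norm (a l) * B" by (simp add: mult_left_mono)
      also have "\<dots> < \<delta> * B" using a B(1) by simp
      finally show "norm (a l) * norm (v $ l) < \<delta> * B" .
    qed simp_all
    also have "\<dots> = \<eta>" using B(1) by (simp add: \<delta>_def)
    finally show ?thesis .
  qed
  moreover have "\<delta> > 0" using assms(2) B(1) by (simp add: \<delta>_def)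
  ultimately show ?thesis using that by blast
qed

theorem mainTheorem1:
  fixes k :: nat
    and T :: "((complex^'n::finite) \<times> (complex^'n)) set"
    and f :: "(complex^'n) \<times> (complex^'n) \<Rightarrow> bicomplex"
    and w0 :: bicomplex
  assumes "k \<ge> 2"
    and "bounded (fst ` T)" and "bounded (snd ` T)"
    and "is_weighting_vector k T f w0 (\<lambda>_. (0, 0))"
  shows "\<exists>w0' :: bicomplex. \<exists>\<delta>::real. \<delta> > 0 \<and>
           (\<forall>w :: 'n \<Rightarrow> bicomplex.
              (\<forall>l. norm (fst (w l)) < \<delta> \<and> norm (snd (w l)) < \<delta>) \<longrightarrow>
              is_weighting_vector k T f w0' w)"
proof -
  have f: "f x = (cact k (fst w0), cact k (snd w0))" if "x \<in> T" for x
    using assms(4) that by (simp add: is_weighting_vector_def wsum1_def wsum2_def)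
  have k: "k > 0" using assms(1) by simp
  obtain c1 \<eta>1 where \<eta>1: "\<eta>1 > 0" "\<And>z. z \<in> ball c1 \<eta>1 \<Longrightarrow> z \<noteq> 0 \<and> cact k z = cact k (fst w0)"
    using cact_constant_on_ball[OF k] by metis
  obtain c2 \<eta>2 where \<eta>2: "\<eta>2 > 0" "\<And>z. z \<in> ball c2 \<eta>2 \<Longrightarrow> z \<noteq> 0 \<and> cact k z = cact k (snd w0)"
    using cact_constant_on_ball[OF k] by metis
  obtain \<delta>1 where \<delta>1: "\<delta>1 > 0"
    "\<And>a v. \<forall>l. norm (a l) < \<delta>1 \<Longrightarrow> v \<in> fst ` T \<Longrightarrow> norm (\<Sum>l\<in>UNIV. a l * v $ l) < \<eta>1"
    using small_weights_small_sum[OF assms(2) \<eta>1(1)] by metis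
  obtain \<delta>2 where \<delta>2: "\<delta>2 > 0"
    "\<And>a v. \<forall>l. norm (a l) < \<delta>2 \<Longrightarrow> v \<in> snd ` T \<Longrightarrow> norm (\<Sum>l\<in>UNIV. a l * v $ l) < \<eta>2"
    using small_weights_small_sum[OF assms(3) \<eta>2(1)] by metis
  have "is_weighting_vector k T f (c1, c2) w"
    if "\<forall>l. norm (fst (w l)) < min \<delta>1 \<delta>2 \<and> norm (snd (w l)) < min \<delta>1 \<delta>2" for w
  proof -
    have "wsum1 (c1, c2) w x \<in> ball c1 \<eta>1" "wsum2 (c1, c2) w x \<in> ball c2 \<eta>2" if "x \<in> T" for x
      using \<delta>1(2)[of "\<lambda>l. fst (w l)" "fst x"] \<delta>2(2)[of "\<lambda>l. snd (w l)" "snd x"]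
        \<open>\<forall>l. _\<close> \<open>x \<in> T\<close> by (auto simp: wsum1_def wsum2_def dist_norm)
    then show ?thesis using \<eta>1(2) \<eta>2(2) f by (simp add: is_weighting_vector_def)
  qed
  then show ?thesis using \<delta>1(1) \<delta>2(1) by (metis min_less_iff_conj)
qed

end
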